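(* Let $k\ge1$ and let $m>3$ be a vertex of the finite tree $\mathcal{T}_{2,3}^k$. Then the number of children of $m$ in $\mathcal{T}_{2,3}^k$ equals $$\sum_{j=0}^{\lfloor m/4\rfloor}\binom{k}{j}\binom{k-j}{m-4j}.$$
   Context: For integers $b>1$, $e>1$ and a positive integer $n=\sum_{i=0}^{r} d_i b^i$ written in base $b$ (digits $0\le d_i\le b-1$), the $e$-power base-$b$ happy function is $S_{e,b}(n)=\sum_{i=0}^{r} d_i^e$. A positive integer $n$ is $e$-power $b$-happy if $S_{e,b}^{\ell}(n)=1$ for some $\ell\ge 1$. The tree $\mathcal{T}_{e,b}$ has as vertices all $e$-power $b$-happy numbers, with root $1$; a happy number $n\neq 1$ is a child of the vertex $S_{e,b}(n)$. For $k\ge1$, $\mathcal{T}_{e,b}^k$ is the subtree on the happy numbers having at most $k$ digits in base $b$ (i.e. $n<b^k$); thus the children of a vertex $m$ in $\mathcal{T}_{e,b}^k$ are the happy integers $n$ with $1\le n<b^k$, $n\neq1$, and $S_{e,b}(n)=m$. Binomial coefficients $\binom{a}{c}$ are taken to be $0$ when $c<0$ or $c>a$ (including when $a<0$). *)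

theory Defs
  imports Main
begin

text \<open>Digit i of n is (n div b^i) mod b; digits with index beyond the length are 0,
  so summing over i < n+1 covers all digits when b > 1.\<close>
definition happyS :: "nat \<Rightarrow> nat \<Rightarrow> nat \<Rightarrow> nat" where
  "happyS e b n = (\<Sum>i<Suc n. ((n div b ^ i) mod b) ^ e)"

definition is_happy :: "nat \<Rightarrow> nat \<Rightarrow> nat \<Rightarrow> bool" where
  "is_happy e b n \<longleftrightarrow> n > 0 \<and> (\<exists>l\<ge>1. (happyS e b ^^ l) n = 1)"

definition tree_vertex :: "nat \<Rightarrow> nat \<Rightarrow> nat \<Rightarrow> nat \<Rightarrow> bool" where
  "tree_vertex e b k m \<longleftrightarrow> is_happy e b m \<and> m < b ^ k"

definition tree_children :: "nat \<Rightarrow> nat \<Rightarrow> nat \<Rightarrow> nat \<Rightarrow> nat set" where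
  "tree_children e b k m = {n. 1 \<le> n \<and> n < b ^ k \<and> n \<noteq> 1 \<and> is_happy e b n \<and> happyS e b n = m}"

end

theory Submission
  imports Defs
begin

text \<open>For n < 3^k let a and c be the numbers of digits 1 and 2 among the k ternary digits of n,
  so that S(n) = a + 4c. A number n with S(n) = m is happy because m is, and it differs from 0 and 1
  because m > 1; hence the children of m are exactly the n < 3^k with a + 4c = m. Sorting them by
  c = j, there are (k choose j) * ((k - j) choose (m - 4j)) ways to place j twos and m - 4j ones
  among the k digit positions.\<close>

fun digit_count :: "nat \<Rightarrow> nat \<Rightarrow> nat \<Rightarrow> nat \<Rightarrow> nat" where
  "digit_count b d 0 n = 0"
| "digit_count b d (Suc k) n = (if n mod b = d then 1 else 0) + digit_count b d k (n div b)"

lemma sum_digits_Suc: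
  fixes n b :: nat
  shows "(\<Sum>i<Suc k. f ((n div b ^ i) mod b)) = f (n mod b) + (\<Sum>i<k. f ((n div b div b ^ i) mod b))"
  unfolding sum.lessThan_Suc_shift by (simp add: div_mult2_eq)

lemma sum_digits_eq_digit_counts:
  fixes n b :: nat
  assumes "b > 0"
  shows "(\<Sum>i<k. f ((n div b ^ i) mod b)) = (\<Sum>d<b. f d * digit_count b d k n)"
proof (induction k arbitrary: n)
  case (Suc k)
  have "f (n mod b) = (\<Sum>d<b. f d * (if n mod b = d then 1 else 0))"
    using assms by (simp add: if_distrib sum.delta' cong: if_cong)
  then show ?case
    unfolding sum_digits_Suc Suc by (simp add: distrib_left sum.distrib)
qed simp

lemma sum_digits_truncate:
  fixes n b :: nat
  assumes "b > 0" and "n < b ^ K" and "K \<le> N" and "e > 0"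
  shows "(\<Sum>i<N. ((n div b ^ i) mod b) ^ e) = (\<Sum>i<K. ((n div b ^ i) mod b) ^ e)"
proof (rule sum.mono_neutral_right)
  show "\<forall>i\<in>{..<N} - {..<K}. ((n div b ^ i) mod b) ^ e = 0"
  proof
    fix i assume "i \<in> {..<N} - {..<K}"
    then have "b ^ K \<le> b ^ i"
      using assms(1) by (simp add: power_increasing Suc_le_eq)
    then show "((n div b ^ i) mod b) ^ e = 0"
      using assms(2,4) by simp
  qed
qed (use assms(3) in auto)

lemma happyS_eq_sum_digits:
  assumes "b > 1" and "e > 0" and "n < b ^ k"
  shows "happyS e b n = (\<Sum>i<k. ((n div b ^ i) mod b) ^ e)"
proof -
  let ?K = "min k (Suc n)"
  have "n < b ^ ?K"
    using assms(1,3) power_gt_expt[of b "Suc n"] by (simp add: min_def)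
  moreover have "b > 0"
    using assms(1) by simp
  ultimately show ?thesis
    unfolding happyS_def
    using sum_digits_truncate[of b n ?K "Suc n" e] sum_digits_truncate[of b n ?K k e] assms(2)
    by simp
qed

lemma happyS_2_3:
  assumes "n < 3 ^ k"
  shows "happyS 2 3 n = digit_count 3 1 k n + 4 * digit_count 3 2 k n"
proof -
  have "happyS 2 3 n = (\<Sum>i<k. ((n div 3 ^ i) mod 3) ^ 2)"
    using assms by (intro happyS_eq_sum_digits) simp_all
  also have "\<dots> = (\<Sum>d<3. d ^ 2 * digit_count 3 d k n)"
    by (rule sum_digits_eq_digit_counts) simp
  also have "\<dots> = digit_count 3 1 k n + 4 * digit_count 3 2 k n"
    by (simp add: lessThan_nat_numeral)
  finally show ?thesis .
qed

lemma happyS_0: "e > 0 \<Longrightarrow> happyS e b 0 = 0"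
  by (simp add: happyS_def)

lemma happyS_1: "b > 1 \<Longrightarrow> e > 0 \<Longrightarrow> happyS e b 1 = 1"
  by (simp add: happyS_def)

lemma is_happy_if_happyS_happy:
  assumes "is_happy e b m" and "happyS e b n = m" and "n > 0"
  shows "is_happy e b n"
proof -
  obtain l where "(happyS e b ^^ l) m = 1"
    using assms(1) unfolding is_happy_def by blast
  then have "(happyS e b ^^ Suc l) n = 1"
    using assms(2) by (simp add: funpow_Suc_right del: funpow.simps)
  then show ?thesis
    using assms(3) unfolding is_happy_def by (intro conjI exI[of _ "Suc l"]) simp_all
qed

lemma tree_children_eq_preimage:
  assumes "b > 1" and "e > 0" and "is_happy e b m" and "m > 1"
  shows "tree_children e b k m = {n. n < b ^ k \<and> happyS e b n = m}"
  unfolding tree_children_def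
proof (intro Collect_cong iffI)
  fix n
  assume n: "n < b ^ k \<and> happyS e b n = m"
  have "n \<noteq> 0"
  proof
    assume "n = 0"
    then show False
      using n assms(4) happyS_0[OF assms(2)] by simp
  qed
  moreover have "n \<noteq> 1"
  proof
    assume "n = 1"
    then show False
      using n assms(4) happyS_1[OF assms(1,2)] by simp
  qed
  moreover have "is_happy e b n"
    using is_happy_if_happyS_happy[OF assms(3)] n \<open>n \<noteq> 0\<close> by simp
  ultimately show "1 \<le> n \<and> n < b ^ k \<and> n \<noteq> 1 \<and> is_happy e b n \<and> happyS e b n = m"
    using n by simp
qed simp

lemma card_lessThan_filter_eq_sum:
  fixes M :: nat
  shows "card {n. n < M \<and> P n} = (\<Sum>n<M. if P n then 1 else 0)"
proof -
  have eq: "{n. n < M \<and> P n} = {n \<in> {..<M}. P n}"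
    by auto
  show ?thesis
    unfolding eq card_eq_sum by (rule sum.inter_filter) simp
qed

lemma sum_lessThan_3_mult:
  fixes f :: "nat \<Rightarrow> 'a :: comm_monoid_add"
  shows "(\<Sum>n<3 * N. f n) = (\<Sum>q<N. f (3 * q)) + (\<Sum>q<N. f (3 * q + 1)) + (\<Sum>q<N. f (3 * q + 2))"
proof (induction N)
  case (Suc N)
  have "3 * Suc N = Suc (Suc (Suc (3 * N)))"
    by simp
  then have "(\<Sum>n<3 * Suc N. f n) = (\<Sum>n<3 * N. f n) + f (3 * N) + f (3 * N + 1) + f (3 * N + 2)"
    by (simp only: sum.lessThan_Suc) (simp add: numeral_2_eq_2)
  then show ?case
    by (simp add: Suc.IH add_ac)
qed simp

lemma card_lessThan_3_mult_filter:
  fixes N :: nat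
  shows "card {n. n < 3 * N \<and> P n} =
     card {q. q < N \<and> P (3 * q)} + card {q. q < N \<and> P (3 * q + 1)} + card {q. q < N \<and> P (3 * q + 2)}"
  by (simp only: card_lessThan_filter_eq_sum sum_lessThan_3_mult)

definition ternary_profile_count :: "nat \<Rightarrow> nat \<Rightarrow> nat \<Rightarrow> nat" where
  "ternary_profile_count k j i =
     card {n. n < 3 ^ k \<and> digit_count 3 2 k n = j \<and> digit_count 3 1 k n = i}"

lemma ternary_profile_count_Suc:
  "ternary_profile_count (Suc k) j i =
     ternary_profile_count k j i
   + (if i \<ge> 1 then ternary_profile_count k j (i - 1) else 0)
   + (if j \<ge> 1 then ternary_profile_count k (j - 1) i else 0)"
proof -
  have digits: "(3 * q) mod 3 = 0" "(3 * q) div 3 = q" "(3 * q + 1) mod 3 = 1" "(3 * q + 1) div 3 = q"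
    "(3 * q + 2) mod 3 = 2" "(3 * q + 2) div 3 = q" for q :: nat
    by presburger+
  have "ternary_profile_count (Suc k) j i =
      card {q. q < 3 ^ k \<and> digit_count 3 2 k q = j \<and> digit_count 3 1 k q = i}
    + card {q. q < 3 ^ k \<and> digit_count 3 2 k q = j \<and> Suc (digit_count 3 1 k q) = i}
    + card {q. q < 3 ^ k \<and> Suc (digit_count 3 2 k q) = j \<and> digit_count 3 1 k q = i}"
    unfolding ternary_profile_count_def power_Suc card_lessThan_3_mult_filter
    by (simp only: digit_count.simps digits) simp
  then show ?thesis
    unfolding ternary_profile_count_def by (cases i; cases j) simp_all
qed

lemma choose_mult_choose_Suc:
  "(Suc k choose j) * (Suc k - j choose i) =
     (k choose j) * (k - j choose i)
   + (if i \<ge> 1 then (k choose j) * (k - j choose (i - 1)) else 0)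
   + (if j \<ge> 1 then (k choose (j - 1)) * (Suc k - j choose i) else 0)"
proof (cases j)
  case 0
  then show ?thesis by (cases i) auto
next
  case (Suc j')
  show ?thesis
  proof (cases "j \<le> k")
    case True
    then obtain r where r: "k - j' = Suc r" "Suc k - j = Suc r" "k - j = r"
      using Suc by (metis Suc_diff_le Suc_le_lessD diff_Suc_Suc less_eq_Suc_le)
    show ?thesis
      using Suc r by (cases i) (simp_all add: algebra_simps)
  next
    case False
    then show ?thesis
      using Suc by (cases i) auto
  qed
qed

lemma ternary_profile_count_eq_choose:
  "ternary_profile_count k j i = (k choose j) * ((k - j) choose i)"
proof (induction k arbitrary: j i)
  case 0
  have "{n. n < 1 \<and> P n} = (if P 0 then {0} else {})" for P :: "nat \<Rightarrow> bool"
    by auto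
  then show ?case
    unfolding ternary_profile_count_def by simp
next
  case (Suc k)
  show ?case
    unfolding ternary_profile_count_Suc Suc choose_mult_choose_Suc by (cases j; cases i) auto
qed

lemma card_happyS_2_3_preimage:
  "card {n. n < 3 ^ k \<and> happyS 2 3 n = m} =
     (\<Sum>j=0..m div 4. ternary_profile_count k j (m - 4 * j))"
proof -
  let ?fibre = "\<lambda>j. {n. n < 3 ^ k \<and> digit_count 3 2 k n = j \<and> digit_count 3 1 k n = m - 4 * j}"
  have partition: "{n. n < 3 ^ k \<and> happyS 2 3 n = m} = (\<Union>j\<in>{0..m div 4}. ?fibre j)"
    by (auto simp: happyS_2_3)
  show ?thesis
    unfolding partition ternary_profile_count_def by (rule card_UN_disjoint) auto
qed

theorem mainTheorem3:
  fixes k m :: nat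
  assumes "k \<ge> 1" and "tree_vertex 2 3 k m" and "m > 3"
  shows "card (tree_children 2 3 k m) =
    (\<Sum>j=0..m div 4. (k choose j) * ((k - j) choose (m - 4 * j)))"
proof -
  have "is_happy 2 3 m"
    using assms(2) by (simp add: tree_vertex_def)
  then have "tree_children 2 3 k m = {n. n < 3 ^ k \<and> happyS 2 3 n = m}"
    using assms(3) by (intro tree_children_eq_preimage) simp_all
  then show ?thesis
    by (simp add: card_happyS_2_3_preimage ternary_profile_count_eq_choose)
qed

end
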